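(* For every $\alpha>0$, the essential norm of the generalized Alexander operator $C_{g_0}:\mathcal{B}_\alpha^0\to\mathcal{B}_\alpha^0$ is $0$.
   Context: $\mathbb{D}=\{z\in\mathbb{C}:|z|<1\}$. For $\alpha>0$, the $\alpha$-Bloch space $\mathcal{B}_\alpha$ is the space of analytic functions $f$ on $\mathbb{D}$ with $\|f\|_{\mathcal{B}_\alpha}:=\sup_{z\in\mathbb{D}}(1-|z|^2)^\alpha|f'(z)|<\infty$. $\mathcal{B}_\alpha^0=\{f\in\mathcal{B}_\alpha: f(0)=0\}$, normed by $\|\cdot\|_{\mathcal{B}_\alpha}$ (a Banach space). Let $g_0(w)=\sum_{j=1}^k a_j+h(w)$, where $k\ge1$, $a_j\in\mathbb{C}$ with $|a_j|>0$, and $h$ is a bounded analytic function on $\mathbb{D}$. The generalized Alexander operator is $C_{g_0}(f)(z)=\int_0^z\frac{f(w)g_0(w)}{w}\,dw$. The essential norm of a bounded operator $T:X\to Y$ between Banach spaces is $\|T\|_e=\inf\{\|T+K\|: K:X\to Y \text{ compact}\}$, $\|\cdot\|$ the operator norm. *)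

theory Defs
  imports "HOL-Complex_Analysis.Complex_Analysis"
begin

definition bloch_norm :: "real \<Rightarrow> (complex \<Rightarrow> complex) \<Rightarrow> ereal" where
  "bloch_norm \<alpha> f = (SUP z\<in>ball 0 1. ereal ((1 - (cmod z)\<^sup>2) powr \<alpha> * cmod (deriv f z)))"

definition bloch0 :: "real \<Rightarrow> (complex \<Rightarrow> complex) set" where
  "bloch0 \<alpha> = {f. f holomorphic_on ball 0 1 \<and> bloch_norm \<alpha> f < \<infinity> \<and> f 0 = 0}"

definition op_norm :: "real \<Rightarrow> ((complex \<Rightarrow> complex) \<Rightarrow> (complex \<Rightarrow> complex)) \<Rightarrow> ereal" where
  "op_norm \<alpha> T = (SUP f\<in>{f\<in>bloch0 \<alpha>. bloch_norm \<alpha> f \<le> 1}. bloch_norm \<alpha> (T f))"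

definition linear_op :: "real \<Rightarrow> ((complex \<Rightarrow> complex) \<Rightarrow> (complex \<Rightarrow> complex)) \<Rightarrow> bool" where
  "linear_op \<alpha> K \<longleftrightarrow> (\<forall>f\<in>bloch0 \<alpha>. K f \<in> bloch0 \<alpha>) \<and>
     (\<forall>f\<in>bloch0 \<alpha>. \<forall>g\<in>bloch0 \<alpha>. K (\<lambda>z. f z + g z) = (\<lambda>z. K f z + K g z)) \<and>
     (\<forall>f\<in>bloch0 \<alpha>. \<forall>c. K (\<lambda>z. c * f z) = (\<lambda>z. c * K f z))"

definition compact_op :: "real \<Rightarrow> ((complex \<Rightarrow> complex) \<Rightarrow> (complex \<Rightarrow> complex)) \<Rightarrow> bool" where
  "compact_op \<alpha> K \<longleftrightarrow> linear_op \<alpha> K \<and>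
     (\<forall>F :: nat \<Rightarrow> complex \<Rightarrow> complex. (\<forall>n. F n \<in> bloch0 \<alpha>) \<longrightarrow>
        (\<exists>M::real. \<forall>n. bloch_norm \<alpha> (F n) \<le> ereal M) \<longrightarrow>
        (\<exists>r g. strict_mono r \<and> g \<in> bloch0 \<alpha> \<and>
           ((\<lambda>n. bloch_norm \<alpha> (\<lambda>z. K (F (r n)) z - g z)) \<longlongrightarrow> 0) sequentially))"

definition ess_norm :: "real \<Rightarrow> ((complex \<Rightarrow> complex) \<Rightarrow> (complex \<Rightarrow> complex)) \<Rightarrow> ereal" where
  "ess_norm \<alpha> T = (INF K\<in>{K. compact_op \<alpha> K}. op_norm \<alpha> (\<lambda>f z. T f z + K f z))"

definition alexander_op :: "(complex \<Rightarrow> complex) \<Rightarrow> (complex \<Rightarrow> complex) \<Rightarrow> complex \<Rightarrow> complex" where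
  "alexander_op g f = (\<lambda>z. contour_integral (linepath 0 z) (\<lambda>w. f w * g w / w))"

end

(* Let K be the negative of C_g, cut off outside the disc. Then C_g + K vanishes on the disc, so
   the essential norm is 0 once K is compact.
   Fix 0 < beta < alpha <= beta + 1. Integrating the Bloch bound along rays, a function of
   B_alpha^0 of norm at most M satisfies |f z| <= (M / beta) (1 - |z|) ^ (-beta), so by Montel a
   bounded sequence has a locally uniformly convergent subsequence. The Bloch norm of C_g f is the
   supremum of (1 - |z|^2) ^ alpha |f z g z / z|. Near the boundary the growth bound makes this
   O((1 - |z|) ^ (alpha - beta)) uniformly along the sequence, while on a disc of radius rho the
   maximum modulus principle bounds it by the values of f on the circle |w| = rho, which tend to 0
   along the subsequence. *)

theory Submission
  imports Defs
begin

definition alexander_integrand ::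
    "(complex \<Rightarrow> complex) \<Rightarrow> (complex \<Rightarrow> complex) \<Rightarrow> complex \<Rightarrow> complex" where
  "alexander_integrand g f w = (if w = 0 then deriv f 0 * g 0 else f w * g w / w)"

lemma holomorphic_on_alexander_integrand:
  assumes g: "g holomorphic_on ball 0 1" and f: "f holomorphic_on ball 0 1" and f0: "f 0 = 0"
  shows "alexander_integrand g f holomorphic_on ball 0 1"
proof -
  have "(\<lambda>z. if z = 0 then deriv f 0 else (f z - f 0) / (z - 0)) holomorphic_on ball 0 1"
    by (rule pole_lemma[OF f]) auto
  then have "(\<lambda>z. (if z = 0 then deriv f 0 else (f z - f 0) / (z - 0)) * g z) holomorphic_on ball 0 1"
    using g by (intro holomorphic_intros)
  also have "(\<lambda>z. (if z = 0 then deriv f 0 else (f z - f 0) / (z - 0)) * g z) = alexander_integrand g f"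
    by (rule ext) (simp add: alexander_integrand_def f0)
  finally show ?thesis .
qed

lemma alexander_op_on_disc:
  assumes g: "g holomorphic_on ball 0 1" and f: "f holomorphic_on ball 0 1" and f0: "f 0 = 0"
    and z: "z \<in> ball 0 1"
  shows "((\<lambda>w. f w * g w / w) has_contour_integral alexander_op g f z) (linepath 0 z)"
    and "(alexander_op g f has_field_derivative alexander_integrand g f z) (at z)"
proof -
  obtain Q where Q: "\<And>x. x \<in> ball 0 1 \<Longrightarrow> (Q has_field_derivative alexander_integrand g f x) (at x)"
    using holomorphic_convex_primitive'[OF convex_ball open_ball
        holomorphic_on_alexander_integrand[OF g f f0]]
    by (metis at_within_open open_ball)
  have integral: "((\<lambda>w. f w * g w / w) has_contour_integral (Q x - Q 0)) (linepath 0 x)"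
    if x: "x \<in> ball 0 1" for x
  proof -
    have "path_image (linepath 0 x) \<subseteq> ball 0 1"
      using x convex_ball[of "0::complex" 1, unfolded convex_contains_segment] by auto
    then have "(alexander_integrand g f has_contour_integral (Q x - Q 0)) (linepath 0 x)"
      using contour_integral_primitive[OF _ valid_path_linepath] Q
      by (metis has_field_derivative_at_within pathfinish_linepath pathstart_linepath)
    then have "((\<lambda>t. alexander_integrand g f (linepath 0 x t) * x) has_integral (Q x - Q 0)) {0..1}"
      by (simp add: has_contour_integral_linepath)
    then have "((\<lambda>t. f (linepath 0 x t) * g (linepath 0 x t) / linepath 0 x t * x)
        has_integral (Q x - Q 0)) {0..1}"
      by (rule has_integral_spike_finite[of "{0}", rotated 2])
        (auto simp: alexander_integrand_def linepath_def)
    then show ?thesis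
      by (simp add: has_contour_integral_linepath)
  qed
  have alexander_eq: "alexander_op g f x = Q x - Q 0" if "x \<in> ball 0 1" for x
    unfolding alexander_op_def using integral[OF that] by (rule contour_integral_unique)
  show "((\<lambda>w. f w * g w / w) has_contour_integral alexander_op g f z) (linepath 0 z)"
    using integral[OF z] alexander_eq[OF z] by simp
  show "(alexander_op g f has_field_derivative alexander_integrand g f z) (at z)"
  proof (rule has_field_derivative_transform_within_open[OF _ open_ball z])
    show "((\<lambda>x. Q x - Q 0) has_field_derivative alexander_integrand g f z) (at z)"
      using Q[OF z] by (auto intro!: derivative_eq_intros)
  qed (use alexander_eq in simp)
qed

lemma alexander_op_lincomb:
  assumes g: "g holomorphic_on ball 0 1"
    and f1: "f1 holomorphic_on ball 0 1" "f1 0 = 0" and f2: "f2 holomorphic_on ball 0 1" "f2 0 = 0"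
    and z: "z \<in> ball 0 1"
  shows "alexander_op g (\<lambda>w. c1 * f1 w + c2 * f2 w) z
           = c1 * alexander_op g f1 z + c2 * alexander_op g f2 z"
proof -
  have "((\<lambda>w. c1 * (f1 w * g w / w) + c2 * (f2 w * g w / w)) has_contour_integral
      (c1 * alexander_op g f1 z + c2 * alexander_op g f2 z)) (linepath 0 z)"
    by (intro has_contour_integral_add has_contour_integral_lmul alexander_op_on_disc(1) g f1 f2 z)
  then have "((\<lambda>w. (c1 * f1 w + c2 * f2 w) * g w / w) has_contour_integral
      (c1 * alexander_op g f1 z + c2 * alexander_op g f2 z)) (linepath 0 z)"
    by (simp add: algebra_simps add_divide_distrib)
  then show ?thesis
    unfolding alexander_op_def[of g "\<lambda>w. c1 * f1 w + c2 * f2 w"] by (rule contour_integral_unique)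
qed

(* The restriction to the disc makes the operator linear: off the disc the contour integral
   need not exist and alexander_op takes arbitrary values there. *)
definition neg_alexander_on_disc ::
    "(complex \<Rightarrow> complex) \<Rightarrow> (complex \<Rightarrow> complex) \<Rightarrow> complex \<Rightarrow> complex" where
  "neg_alexander_on_disc g f = (\<lambda>z. if z \<in> ball 0 1 then - alexander_op g f z else 0)"

lemma neg_alexander_on_disc_lincomb:
  assumes "g holomorphic_on ball 0 1"
    and "f1 holomorphic_on ball 0 1" "f1 0 = 0" and "f2 holomorphic_on ball 0 1" "f2 0 = 0"
  shows "neg_alexander_on_disc g (\<lambda>w. c1 * f1 w + c2 * f2 w)
           = (\<lambda>z. c1 * neg_alexander_on_disc g f1 z + c2 * neg_alexander_on_disc g f2 z)"
  using alexander_op_lincomb[OF assms] by (auto simp: neg_alexander_on_disc_def algebra_simps)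

lemma neg_alexander_on_disc_0 [simp]: "neg_alexander_on_disc g f 0 = 0"
  by (simp add: neg_alexander_on_disc_def alexander_op_def)

lemma has_field_derivative_neg_alexander_on_disc:
  assumes "g holomorphic_on ball 0 1" "f holomorphic_on ball 0 1" "f 0 = 0" and z: "z \<in> ball 0 1"
  shows "(neg_alexander_on_disc g f has_field_derivative - alexander_integrand g f z) (at z)"
proof (rule has_field_derivative_transform_within_open[OF _ open_ball z])
  show "((\<lambda>x. - alexander_op g f x) has_field_derivative - alexander_integrand g f z) (at z)"
    using alexander_op_on_disc(2)[OF assms] by (rule DERIV_minus)
qed (simp add: neg_alexander_on_disc_def)

lemma holomorphic_on_neg_alexander_on_disc:
  assumes "g holomorphic_on ball 0 1" "f holomorphic_on ball 0 1" "f 0 = 0"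
  shows "neg_alexander_on_disc g f holomorphic_on ball 0 1"
  using has_field_derivative_neg_alexander_on_disc[OF assms]
  by (meson field_differentiable_def holomorphic_on_open open_ball)

lemma deriv_neg_alexander_on_disc:
  assumes "g holomorphic_on ball 0 1" "f holomorphic_on ball 0 1" "f 0 = 0" and "z \<in> ball 0 1"
  shows "deriv (neg_alexander_on_disc g f) z = - alexander_integrand g f z"
  using has_field_derivative_neg_alexander_on_disc[OF assms] by (rule DERIV_imp_deriv)

lemma bloch_norm_le_ereal_iff:
  "bloch_norm \<alpha> f \<le> ereal M \<longleftrightarrow> (\<forall>z\<in>ball 0 1. (1 - (cmod z)\<^sup>2) powr \<alpha> * cmod (deriv f z) \<le> M)"
  unfolding bloch_norm_def by (simp add: SUP_le_iff)

lemma bloch_norm_nonneg: "0 \<le> bloch_norm \<alpha> f"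
proof -
  have "ereal ((1 - (cmod (0::complex))\<^sup>2) powr \<alpha> * cmod (deriv f 0)) \<le> bloch_norm \<alpha> f"
    unfolding bloch_norm_def by (rule SUP_upper) simp
  then show ?thesis
    by (rule order_trans[rotated]) simp
qed

lemma bloch_norm_neg_alexander_on_disc_le:
  assumes "g holomorphic_on ball 0 1" "f holomorphic_on ball 0 1" "f 0 = 0"
    and "\<And>z. z \<in> ball 0 1 \<Longrightarrow> (1 - (cmod z)\<^sup>2) powr \<alpha> * cmod (alexander_integrand g f z) \<le> B"
  shows "bloch_norm \<alpha> (neg_alexander_on_disc g f) \<le> ereal B"
  using assms(4) deriv_neg_alexander_on_disc[OF assms(1-3)] by (simp add: bloch_norm_le_ereal_iff)

lemma bloch0_growth_bound:
  fixes \<alpha> \<beta> M :: real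
  assumes \<alpha>: "\<alpha> > 0" and \<beta>: "\<beta> > 0" "\<alpha> \<le> \<beta> + 1"
    and f: "f \<in> bloch0 \<alpha>" and M: "bloch_norm \<alpha> f \<le> ereal M" and z: "z \<in> ball 0 1"
  shows "cmod (f z) \<le> M / \<beta> * (1 - cmod z) powr - \<beta>"
proof -
  have f: "f holomorphic_on ball 0 1" "f 0 = 0"
    using f by (auto simp: bloch0_def)
  have M: "(1 - (cmod w)\<^sup>2) powr \<alpha> * cmod (deriv f w) \<le> M" if "w \<in> ball 0 1" for w
    using M that by (simp add: bloch_norm_le_ereal_iff)
  have M0: "M \<ge> 0"
    using M[of 0] by simp (meson norm_ge_zero order_trans)
  show ?thesis
  proof (cases "z = 0")
    case True
    with M0 f(2) \<beta> show ?thesis by simp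
  next
    case False
    define r where "r = cmod z"
    define e where "e = z / r"
    have r: "0 < r" "r < 1" using False z by (auto simp: r_def)
    have e: "cmod e = 1" "z = r * e" using r by (auto simp: e_def norm_divide r_def)
    have ray: "of_real t * e \<in> ball 0 1" if "0 \<le> t" "t < 1" for t
      using that e by (simp add: norm_mult)
    define u where "u = (\<lambda>t::real. f (t * e))"
    define \<phi> where "\<phi> = (\<lambda>t::real. M / \<beta> * (1 - t) powr - \<beta>)"
    have "cmod (u r - u 0) \<le> \<phi> r - \<phi> 0"
    proof (rule differentiable_bound_general[where f' = "\<lambda>t. deriv f (t * e) * e"
          and \<phi>' = "\<lambda>t. M * (1 - t) powr (- \<beta> - 1)"])
      show "continuous_on {0..r} u"
        unfolding u_def using ray r
        by (intro continuous_on_compose2[OF holomorphic_on_imp_continuous_on[OF f(1)]]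
            continuous_intros) auto
      show "continuous_on {0..r} \<phi>"
        unfolding \<phi>_def using r by (intro continuous_intros) auto
      fix t assume t: "0 < t" "t < r"
      have t_in: "of_real t * e \<in> ball 0 1"
        using ray t r by simp
      have "(f has_field_derivative deriv f (t * e)) (at (t * e))"
        using f(1) t_in
        by (meson DERIV_deriv_iff_field_differentiable holomorphic_on_imp_differentiable_at open_ball)
      then have "((\<lambda>w. f (w * e)) has_field_derivative deriv f (t * e) * e) (at (of_real t))"
        by (rule DERIV_chain'[of "\<lambda>w. w * e", rotated]) (auto intro!: derivative_eq_intros)
      then show "(u has_vector_derivative deriv f (t * e) * e) (at t)"
        unfolding u_def by (rule has_vector_derivative_real_field)
      have "(\<phi> has_real_derivative M / \<beta> * (- \<beta> * (1 - t) powr (- \<beta> - 1) * - 1)) (at t)"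
        unfolding \<phi>_def using t r by (auto intro!: derivative_eq_intros)
      then show "(\<phi> has_vector_derivative M * (1 - t) powr (- \<beta> - 1)) (at t)"
        using \<beta> by (simp add: has_real_derivative_iff_has_vector_derivative)
      have "(1 - t) powr (\<beta> + 1) \<le> (1 - t) powr \<alpha>"
        using t r \<beta> by (intro powr_mono') auto
      also have "\<dots> \<le> (1 - t\<^sup>2) powr \<alpha>"
        using t r \<alpha> by (intro powr_mono2) (auto simp: power2_eq_square)
      finally have weight: "(1 - t) powr (\<beta> + 1) \<le> (1 - t\<^sup>2) powr \<alpha>" .
      have "(1 - t\<^sup>2) powr \<alpha> * cmod (deriv f (t * e)) \<le> M"
        using M[OF t_in] e t by (simp add: norm_mult)
      then have "(1 - t) powr (\<beta> + 1) * cmod (deriv f (t * e)) \<le> M"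
        using weight by (meson mult_right_mono norm_ge_zero order_trans)
      then have "cmod (deriv f (t * e)) \<le> M / (1 - t) powr (\<beta> + 1)"
        using t r by (simp add: pos_le_divide_eq mult.commute)
      also have "\<dots> = M * (1 - t) powr - (\<beta> + 1)"
        by (simp only: powr_minus divide_inverse)
      also have "- (\<beta> + 1) = - \<beta> - 1"
        by simp
      finally show "cmod (deriv f (t * e) * e) \<le> M * (1 - t) powr (- \<beta> - 1)"
        using e by (simp add: norm_mult)
    qed (use r in auto)
    moreover have "\<phi> 0 \<ge> 0"
      using M0 \<beta> by (simp add: \<phi>_def)
    moreover have "u r = f z" "u 0 = 0"
      using e(2) f(2) by (simp_all add: u_def)
    ultimately show ?thesis
      by (simp add: \<phi>_def r_def)
  qed
qed

lemma weighted_alexander_integrand_le_near_boundary: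
  fixes \<alpha> \<beta> C G :: real
  assumes \<alpha>: "\<alpha> \<ge> 0" and z: "z \<in> ball 0 1" "cmod z \<ge> 1/2"
    and f: "cmod (f z) \<le> C * (1 - cmod z) powr - \<beta>" and g: "cmod (g z) \<le> G"
  shows "(1 - (cmod z)\<^sup>2) powr \<alpha> * cmod (alexander_integrand g f z)
           \<le> 2 powr (\<alpha> + 1) * C * G * (1 - cmod z) powr (\<alpha> - \<beta>)"
proof -
  define s where "s = cmod z"
  have s: "1/2 \<le> s" "s < 1" using z by (auto simp: s_def)
  have "cmod (alexander_integrand g f z) = cmod (f z) * cmod (g z) / s"
    using s by (auto simp: alexander_integrand_def norm_mult norm_divide s_def)
  also have "\<dots> \<le> 2 * (cmod (f z) * cmod (g z))"
    using s mult_left_mono[of 1 "2 * s" "cmod (f z) * cmod (g z)"] by (simp add: divide_le_eq)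
  also have "\<dots> \<le> 2 * (C * (1 - s) powr - \<beta> * G)"
    using f g order_trans[OF norm_ge_zero f] by (intro mult_left_mono mult_mono) (auto simp: s_def)
  finally have integrand: "cmod (alexander_integrand g f z) \<le> 2 * (C * (1 - s) powr - \<beta> * G)" .
  have "1 - s\<^sup>2 \<le> 2 * (1 - s)"
    using power2_diff[of 1 s] zero_le_power2[of "1 - s"] by simp
  then have "(1 - s\<^sup>2) powr \<alpha> \<le> (2 * (1 - s)) powr \<alpha>"
    using s \<alpha> by (intro powr_mono2) (auto simp: abs_square_le_1)
  also have "\<dots> = 2 powr \<alpha> * (1 - s) powr \<alpha>"
    by (rule powr_mult)
  finally have weight: "(1 - s\<^sup>2) powr \<alpha> \<le> 2 powr \<alpha> * (1 - s) powr \<alpha>" .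
  have "(1 - s\<^sup>2) powr \<alpha> * cmod (alexander_integrand g f z)
      \<le> (2 powr \<alpha> * (1 - s) powr \<alpha>) * (2 * (C * (1 - s) powr - \<beta> * G))"
    using weight integrand by (intro mult_mono) auto
  also have "\<dots> = 2 powr (\<alpha> + 1) * C * G * (1 - s) powr (\<alpha> - \<beta>)"
    by (simp add: powr_add powr_diff powr_minus divide_inverse)
  finally show ?thesis by (simp add: s_def)
qed

lemma norm_alexander_integrand_le_on_cball:
  fixes \<rho> \<eta> G :: real
  assumes g: "g holomorphic_on ball 0 1" "\<And>w. w \<in> ball 0 1 \<Longrightarrow> cmod (g w) \<le> G"
    and f: "f holomorphic_on ball 0 1" "f 0 = 0"
    and \<rho>: "1/2 \<le> \<rho>" "\<rho> < 1" and \<eta>: "\<And>w. cmod w = \<rho> \<Longrightarrow> cmod (f w) \<le> \<eta>"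
    and z: "cmod z \<le> \<rho>"
  shows "cmod (alexander_integrand g f z) \<le> 2 * \<eta> * G"
proof (rule maximum_modulus_frontier[where f = "alexander_integrand g f" and S = "cball 0 \<rho>"])
  have sub: "cball 0 \<rho> \<subseteq> ball (0::complex) 1"
    using \<rho> by auto
  have holo: "alexander_integrand g f holomorphic_on cball 0 \<rho>"
    using holomorphic_on_alexander_integrand[OF g(1) f] sub by (rule holomorphic_on_subset)
  then show "alexander_integrand g f holomorphic_on interior (cball 0 \<rho>)"
    by (rule holomorphic_on_subset) (rule interior_subset)
  show "continuous_on (closure (cball 0 \<rho>)) (alexander_integrand g f)"
    using holo by (simp add: holomorphic_on_imp_continuous_on)
  fix w :: complex assume "w \<in> frontier (cball 0 \<rho>)"
  then have w: "cmod w = \<rho>" "w \<in> ball 0 1"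
    using \<rho> by auto
  have \<eta>G: "cmod (f w) \<le> \<eta>" "cmod (g w) \<le> G" "0 \<le> \<eta> * G"
    using \<eta>[OF w(1)] g(2)[OF w(2)] by (auto intro: mult_nonneg_nonneg order_trans[OF norm_ge_zero])
  have "cmod (alexander_integrand g f w) = cmod (f w) * cmod (g w) / \<rho>"
    using w \<rho> by (auto simp: alexander_integrand_def norm_mult norm_divide)
  also have "\<dots> \<le> \<eta> * G / \<rho>"
    using \<eta>G \<rho> by (intro divide_right_mono mult_mono) (auto intro: order_trans[OF norm_ge_zero])
  also have "\<dots> \<le> 2 * \<eta> * G"
    using \<eta>G \<rho> mult_left_mono[of 1 "2 * \<rho>" "\<eta> * G"] by (simp add: divide_le_eq)
  finally show "cmod (alexander_integrand g f w) \<le> 2 * \<eta> * G" .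
qed (use z in auto)

lemma weighted_alexander_integrand_le:
  fixes \<alpha> \<beta> C G \<rho> \<eta> :: real
  assumes \<alpha>\<beta>: "0 \<le> \<alpha>" "\<beta> \<le> \<alpha>"
    and g: "g holomorphic_on ball 0 1" "\<And>w. w \<in> ball 0 1 \<Longrightarrow> cmod (g w) \<le> G"
    and f: "f holomorphic_on ball 0 1" "f 0 = 0"
    and growth: "\<And>w. w \<in> ball 0 1 \<Longrightarrow> cmod (f w) \<le> C * (1 - cmod w) powr - \<beta>"
    and \<rho>: "1/2 \<le> \<rho>" "\<rho> < 1" and \<eta>: "\<And>w. cmod w = \<rho> \<Longrightarrow> cmod (f w) \<le> \<eta>"
    and z: "z \<in> ball 0 1"
  shows "(1 - (cmod z)\<^sup>2) powr \<alpha> * cmod (alexander_integrand g f z)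
           \<le> max (2 * \<eta> * G) (2 powr (\<alpha> + 1) * C * G * (1 - \<rho>) powr (\<alpha> - \<beta>))"
proof (cases "cmod z \<le> \<rho>")
  case True
  have "(1 - (cmod z)\<^sup>2) powr \<alpha> \<le> 1"
    using z \<alpha>\<beta> by (intro powr_le1) (auto simp: abs_square_le_1 power_le_one)
  then have "(1 - (cmod z)\<^sup>2) powr \<alpha> * cmod (alexander_integrand g f z)
      \<le> cmod (alexander_integrand g f z)"
    using mult_right_mono norm_ge_zero by fastforce
  also have "\<dots> \<le> 2 * \<eta> * G"
    using norm_alexander_integrand_le_on_cball[OF g f \<rho> \<eta> True] .
  finally show ?thesis by simp
next
  case False
  have "0 \<le> C" "0 \<le> G"
    using order_trans[OF norm_ge_zero growth[of 0]] order_trans[OF norm_ge_zero g(2)[of 0]] by simp_all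
  then have CG: "0 \<le> 2 powr (\<alpha> + 1) * C * G"
    by simp
  have "(1 - (cmod z)\<^sup>2) powr \<alpha> * cmod (alexander_integrand g f z)
      \<le> 2 powr (\<alpha> + 1) * C * G * (1 - cmod z) powr (\<alpha> - \<beta>)"
    using False \<rho> z by (intro weighted_alexander_integrand_le_near_boundary growth g(2) \<alpha>\<beta>) auto
  also have "\<dots> \<le> 2 powr (\<alpha> + 1) * C * G * (1 - \<rho>) powr (\<alpha> - \<beta>)"
    using False z \<alpha>\<beta> CG by (intro mult_left_mono powr_mono2) auto
  finally show ?thesis by simp
qed

lemma neg_alexander_on_disc_in_bloch0:
  fixes \<alpha> \<beta> C G :: real
  assumes \<alpha>\<beta>: "0 \<le> \<alpha>" "\<beta> \<le> \<alpha>"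
    and g: "g holomorphic_on ball 0 1" "\<And>w. w \<in> ball 0 1 \<Longrightarrow> cmod (g w) \<le> G"
    and f: "f holomorphic_on ball 0 1" "f 0 = 0"
    and growth: "\<And>w. w \<in> ball 0 1 \<Longrightarrow> cmod (f w) \<le> C * (1 - cmod w) powr - \<beta>"
  shows "neg_alexander_on_disc g f \<in> bloch0 \<alpha>"
proof -
  define B where
    "B = max (2 * (C * 2 powr \<beta>) * G) (2 powr (\<alpha> + 1) * C * G * (1 - 1/2) powr (\<alpha> - \<beta>))"
  have "cmod (f w) \<le> C * 2 powr \<beta>" if "cmod w = 1/2" for w
    using growth[of w] that by (simp add: powr_minus_divide powr_divide)
  then have "bloch_norm \<alpha> (neg_alexander_on_disc g f) \<le> ereal B"
    unfolding B_def
    by (intro bloch_norm_neg_alexander_on_disc_le weighted_alexander_integrand_le[OF \<alpha>\<beta> g f growth]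
        g f) auto
  also have "\<dots> < \<infinity>"
    by simp
  finally show ?thesis
    using holomorphic_on_neg_alexander_on_disc[OF g(1) f] by (simp add: bloch0_def)
qed

lemma ereal_tendsto_0I:
  fixes X :: "nat \<Rightarrow> ereal"
  assumes "\<And>n. 0 \<le> X n" and "\<And>\<epsilon>. \<epsilon> > 0 \<Longrightarrow> eventually (\<lambda>n. X n \<le> ereal \<epsilon>) sequentially"
  shows "X \<longlonglongrightarrow> 0"
proof (rule order_tendstoI)
  fix y :: ereal assume "y < 0"
  then have "\<forall>n. y < X n"
    using assms(1) less_le_trans by blast
  then show "eventually (\<lambda>n. y < X n) sequentially"
    by (rule always_eventually)
next
  fix y :: ereal assume "0 < y"
  then obtain \<epsilon> where "0 < ereal \<epsilon>" "ereal \<epsilon> < y"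
    using ereal_dense2 by blast
  then have "\<epsilon> > 0" by simp
  from assms(2)[OF this] show "eventually (\<lambda>n. X n < y) sequentially"
    by (rule eventually_mono) (use \<open>ereal \<epsilon> < y\<close> in auto)
qed

lemma bloch_norm_neg_alexander_on_disc_tendsto_0:
  fixes \<alpha> \<beta> C G :: real and d :: "nat \<Rightarrow> complex \<Rightarrow> complex"
  assumes \<alpha>\<beta>: "0 \<le> \<alpha>" "\<beta> < \<alpha>"
    and g: "g holomorphic_on ball 0 1" "\<And>w. w \<in> ball 0 1 \<Longrightarrow> cmod (g w) \<le> G"
    and d: "\<And>n. d n holomorphic_on ball 0 1" "\<And>n. d n 0 = 0"
    and growth: "\<And>n w. w \<in> ball 0 1 \<Longrightarrow> cmod (d n w) \<le> C * (1 - cmod w) powr - \<beta>"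
    and unif: "\<And>\<rho>. \<rho> < 1 \<Longrightarrow> uniform_limit (sphere 0 \<rho>) d (\<lambda>_. 0) sequentially"
  shows "(\<lambda>n. bloch_norm \<alpha> (neg_alexander_on_disc g (d n))) \<longlonglongrightarrow> 0"
proof (rule ereal_tendsto_0I[OF bloch_norm_nonneg])
  fix \<epsilon> :: real assume \<epsilon>: "\<epsilon> > 0"
  define A where "A = 2 powr (\<alpha> + 1) * C * G"
  define \<delta> where "\<delta> = (\<epsilon> / (A + 1)) powr (1 / (\<alpha> - \<beta>))"
  define \<rho> where "\<rho> = max (1/2) (1 - \<delta>)"
  define \<eta> where "\<eta> = \<epsilon> / (2 * G + 1)"
  have G: "0 \<le> G" and "0 \<le> C"
    using order_trans[OF norm_ge_zero g(2)[of 0]] order_trans[OF norm_ge_zero growth[of 0 0]]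
    by simp_all
  then have A: "0 \<le> A"
    by (simp add: A_def)
  have \<rho>: "1/2 \<le> \<rho>" "\<rho> < 1" "0 \<le> 1 - \<rho>" "1 - \<rho> \<le> \<delta>"
    using \<epsilon> A by (auto simp: \<rho>_def \<delta>_def)
  have "A * (1 - \<rho>) powr (\<alpha> - \<beta>) \<le> A * \<delta> powr (\<alpha> - \<beta>)"
    using \<rho> \<alpha>\<beta> A by (intro mult_left_mono powr_mono2) auto
  also have "\<dots> = A * (\<epsilon> / (A + 1))"
    using \<epsilon> A \<alpha>\<beta> by (simp add: \<delta>_def powr_powr)
  also have "\<dots> \<le> \<epsilon>"
    using \<epsilon> A by (simp add: field_simps)
  finally have boundary: "A * (1 - \<rho>) powr (\<alpha> - \<beta>) \<le> \<epsilon>" .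
  have inside: "2 * \<eta> * G \<le> \<epsilon>"
    using \<epsilon> G by (simp add: \<eta>_def field_simps)
  have "\<eta> > 0"
    using \<epsilon> G by (simp add: \<eta>_def)
  with unif[OF \<rho>(2)] have "eventually (\<lambda>n. \<forall>w\<in>sphere 0 \<rho>. dist (d n w) 0 < \<eta>) sequentially"
    by (rule uniform_limitD)
  then show "eventually (\<lambda>n. bloch_norm \<alpha> (neg_alexander_on_disc g (d n)) \<le> ereal \<epsilon>) sequentially"
  proof (rule eventually_mono)
    fix n assume small: "\<forall>w\<in>sphere 0 \<rho>. dist (d n w) 0 < \<eta>"
    have "bloch_norm \<alpha> (neg_alexander_on_disc g (d n))
        \<le> ereal (max (2 * \<eta> * G) (A * (1 - \<rho>) powr (\<alpha> - \<beta>)))"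
      unfolding A_def using small \<alpha>\<beta> \<rho>
      by (intro bloch_norm_neg_alexander_on_disc_le weighted_alexander_integrand_le g d growth)
        (auto simp: less_imp_le)
    also have "\<dots> \<le> ereal \<epsilon>"
      using boundary inside by simp
    finally show "bloch_norm \<alpha> (neg_alexander_on_disc g (d n)) \<le> ereal \<epsilon>" .
  qed
qed

lemma montel_growth_subseq:
  fixes F :: "nat \<Rightarrow> complex \<Rightarrow> complex" and C \<beta> :: real
  assumes \<beta>: "0 \<le> \<beta>" and holo: "\<And>n. F n holomorphic_on ball 0 1"
    and growth: "\<And>n z. z \<in> ball 0 1 \<Longrightarrow> cmod (F n z) \<le> C * (1 - cmod z) powr - \<beta>"
  obtains \<phi> r where "\<phi> holomorphic_on ball 0 1" "strict_mono r"
    "\<And>z. z \<in> ball 0 1 \<Longrightarrow> (\<lambda>n. F (r n) z) \<longlonglongrightarrow> \<phi> z"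
    "\<And>K. compact K \<Longrightarrow> K \<subseteq> ball 0 1 \<Longrightarrow> uniform_limit K (F \<circ> r) \<phi> sequentially"
proof (rule Montel[of "ball 0 1" "{f. \<forall>z\<in>ball 0 1. cmod (f z) \<le> C * (1 - cmod z) powr - \<beta>}
    \<inter> {f. f holomorphic_on ball 0 1}" F])
  fix K :: "complex set" assume K: "compact K" "K \<subseteq> ball 0 1"
  show "\<exists>B. \<forall>h \<in> {f. \<forall>z\<in>ball 0 1. cmod (f z) \<le> C * (1 - cmod z) powr - \<beta>}
      \<inter> {f. f holomorphic_on ball 0 1}. \<forall>z\<in>K. cmod (h z) \<le> B"
  proof (cases "K = {}")
    case False
    then obtain x where x: "x \<in> K" "\<And>y. y \<in> K \<Longrightarrow> cmod y \<le> cmod x"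
      using continuous_attains_sup[OF K(1) _ continuous_on_norm_id] by blast
    have C: "0 \<le> C"
      using order_trans[OF norm_ge_zero growth[of 0 0]] by simp
    have "cmod (h z) \<le> C * (1 - cmod x) powr - \<beta>"
      if "\<forall>z\<in>ball 0 1. cmod (h z) \<le> C * (1 - cmod z) powr - \<beta>" "z \<in> K" for h z
    proof -
      have "cmod (h z) \<le> C * (1 - cmod z) powr - \<beta>"
        using that K by auto
      also have "\<dots> \<le> C * (1 - cmod x) powr - \<beta>"
        using x K that(2) \<beta> C by (intro mult_left_mono powr_mono2') auto
      finally show ?thesis .
    qed
    then show ?thesis by blast
  qed simp
qed (use holo growth in auto)

lemma bloch0_bloch_norm_le_ereal:
  assumes "f \<in> bloch0 \<alpha>"
  obtains M where "bloch_norm \<alpha> f \<le> ereal M"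
  using assms by (cases "bloch_norm \<alpha> f") (auto simp: bloch0_def)

lemma linear_op_neg_alexander_on_disc:
  assumes \<alpha>: "\<alpha> > 0"
    and g: "g holomorphic_on ball 0 1" "\<And>w. w \<in> ball 0 1 \<Longrightarrow> cmod (g w) \<le> G"
  shows "linear_op \<alpha> (neg_alexander_on_disc g)"
  unfolding linear_op_def
proof (intro conjI ballI allI)
  fix f assume f: "f \<in> bloch0 \<alpha>"
  obtain M where M: "bloch_norm \<alpha> f \<le> ereal M"
    using bloch0_bloch_norm_le_ereal[OF f] .
  define \<beta> where "\<beta> = \<alpha> - min 1 \<alpha> / 2"
  have \<beta>: "0 < \<beta>" "\<beta> \<le> \<alpha>" "\<alpha> \<le> \<beta> + 1"
    using \<alpha> by (auto simp: \<beta>_def)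
  have growth: "cmod (f w) \<le> M / \<beta> * (1 - cmod w) powr - \<beta>" if "w \<in> ball 0 1" for w
    using \<alpha> \<beta> that by (intro bloch0_growth_bound[OF _ _ _ f M]) auto
  have "f holomorphic_on ball 0 1" "f 0 = 0"
    using f by (auto simp: bloch0_def)
  from neg_alexander_on_disc_in_bloch0[OF _ _ g this growth]
  show "neg_alexander_on_disc g f \<in> bloch0 \<alpha>"
    using \<alpha> \<beta> by simp
next
  fix f1 f2 assume "f1 \<in> bloch0 \<alpha>" "f2 \<in> bloch0 \<alpha>"
  then show "neg_alexander_on_disc g (\<lambda>z. f1 z + f2 z)
      = (\<lambda>z. neg_alexander_on_disc g f1 z + neg_alexander_on_disc g f2 z)"
    using neg_alexander_on_disc_lincomb[OF g(1), of f1 f2 1 1] by (simp add: bloch0_def)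
next
  fix f c assume "f \<in> bloch0 \<alpha>"
  then show "neg_alexander_on_disc g (\<lambda>z. c * f z) = (\<lambda>z. c * neg_alexander_on_disc g f z)"
    using neg_alexander_on_disc_lincomb[OF g(1), of f f c 0] by (simp add: bloch0_def)
qed

lemma compact_op_neg_alexander_on_disc:
  assumes \<alpha>: "\<alpha> > 0"
    and g: "g holomorphic_on ball 0 1" "\<And>w. w \<in> ball 0 1 \<Longrightarrow> cmod (g w) \<le> G"
  shows "compact_op \<alpha> (neg_alexander_on_disc g)"
  unfolding compact_op_def
proof (intro conjI allI impI linear_op_neg_alexander_on_disc[OF assms])
  fix F :: "nat \<Rightarrow> complex \<Rightarrow> complex"
  assume F: "\<forall>n. F n \<in> bloch0 \<alpha>" and "\<exists>M::real. \<forall>n. bloch_norm \<alpha> (F n) \<le> ereal M"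
  then obtain M where M: "\<And>n. bloch_norm \<alpha> (F n) \<le> ereal M"
    by blast
  define \<beta> where "\<beta> = \<alpha> - min 1 \<alpha> / 2"
  have \<beta>: "0 < \<beta>" "\<beta> < \<alpha>" "\<alpha> \<le> \<beta> + 1"
    using \<alpha> by (auto simp: \<beta>_def)
  define C where "C = M / \<beta>"
  have F_holo: "\<And>n. F n holomorphic_on ball 0 1" and F_0: "\<And>n. F n 0 = 0"
    using F by (auto simp: bloch0_def)
  have F_growth: "cmod (F n z) \<le> C * (1 - cmod z) powr - \<beta>" if "z \<in> ball 0 1" for n z
    unfolding C_def using \<alpha> \<beta> F M that by (intro bloch0_growth_bound) auto
  from \<beta>(1) have "0 \<le> \<beta>"
    by simp
  then obtain \<phi> r where \<phi>: "\<phi> holomorphic_on ball 0 1" and r: "strict_mono r"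
    and pointwise: "\<And>z. z \<in> ball 0 1 \<Longrightarrow> (\<lambda>n. F (r n) z) \<longlonglongrightarrow> \<phi> z"
    and unif: "\<And>K. compact K \<Longrightarrow> K \<subseteq> ball 0 1 \<Longrightarrow> uniform_limit K (F \<circ> r) \<phi> sequentially"
    using F_holo F_growth by (rule montel_growth_subseq[of \<beta> F C]) auto
  have "(\<lambda>n. 0) \<longlonglongrightarrow> \<phi> 0"
    using pointwise[of 0] by (simp add: F_0)
  then have \<phi>_0: "\<phi> 0 = 0"
    by (simp add: LIMSEQ_const_iff)
  have \<phi>_growth: "cmod (\<phi> z) \<le> C * (1 - cmod z) powr - \<beta>" if "z \<in> ball 0 1" for z
  proof (rule tendsto_upperbound[OF tendsto_norm[OF pointwise[OF that]]])
    show "eventually (\<lambda>n. cmod (F (r n) z) \<le> C * (1 - cmod z) powr - \<beta>) sequentially"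
      using F_growth[OF that] by simp
  qed simp
  define d where "d = (\<lambda>n z. F (r n) z - \<phi> z)"
  have d_holo: "d n holomorphic_on ball 0 1" and d_0: "d n 0 = 0" for n
    unfolding d_def using F_holo \<phi> F_0 \<phi>_0 by (auto intro!: holomorphic_intros)
  have d_growth: "cmod (d n z) \<le> (2 * C) * (1 - cmod z) powr - \<beta>" if "z \<in> ball 0 1" for n z
    using norm_triangle_ineq4[of "F (r n) z" "\<phi> z"] F_growth[where n = "r n", OF that] \<phi>_growth[OF that]
    unfolding d_def by (simp only: distrib_right mult_2)
  have d_unif: "uniform_limit (sphere 0 \<rho>) d (\<lambda>_. 0) sequentially" if "\<rho> < 1" for \<rho>
  proof -
    have "uniform_limit (sphere 0 \<rho>) (F \<circ> r) \<phi> sequentially"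
      using that by (intro unif) auto
    from uniform_limit_minus[OF this uniform_limit_const[where c = \<phi>]] show ?thesis
      by (simp add: d_def o_def)
  qed
  have difference: "(\<lambda>z. neg_alexander_on_disc g (F (r n)) z - neg_alexander_on_disc g \<phi> z)
      = neg_alexander_on_disc g (d n)" for n
    using neg_alexander_on_disc_lincomb[OF g(1) F_holo[of "r n"] F_0[of "r n"] \<phi> \<phi>_0, of 1 "-1"]
    by (simp add: d_def)
  show "\<exists>r g'. strict_mono r \<and> g' \<in> bloch0 \<alpha> \<and>
      (\<lambda>n. bloch_norm \<alpha> (\<lambda>z. neg_alexander_on_disc g (F (r n)) z - g' z)) \<longlonglongrightarrow> 0"
  proof (intro exI conjI)
    show "strict_mono r"
      by (rule r)
    show "neg_alexander_on_disc g \<phi> \<in> bloch0 \<alpha>"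
      using \<alpha> \<beta> by (intro neg_alexander_on_disc_in_bloch0[OF _ _ g \<phi> \<phi>_0 \<phi>_growth]) auto
    show "(\<lambda>n. bloch_norm \<alpha> (\<lambda>z. neg_alexander_on_disc g (F (r n)) z - neg_alexander_on_disc g \<phi> z))
        \<longlonglongrightarrow> 0"
      unfolding difference using \<alpha> \<beta>
      by (intro bloch_norm_neg_alexander_on_disc_tendsto_0[OF _ _ g d_holo d_0 d_growth d_unif]) auto
  qed
qed

lemma op_norm_nonneg: "0 \<le> op_norm \<alpha> T"
proof -
  have zero: "bloch_norm \<alpha> (\<lambda>z. 0) \<le> 0"
    using bloch_norm_le_ereal_iff[of \<alpha> "\<lambda>z. 0" 0] by (simp add: zero_ereal_def)
  have "bloch_norm \<alpha> (\<lambda>z. 0) \<le> 1" "bloch_norm \<alpha> (\<lambda>z. 0) < \<infinity>"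
    using zero by (auto elim!: order_trans order.strict_trans1)
  then have "(\<lambda>z. 0) \<in> {f \<in> bloch0 \<alpha>. bloch_norm \<alpha> f \<le> 1}"
    by (simp add: bloch0_def)
  then show ?thesis
    unfolding op_norm_def by (rule SUP_upper2) (rule bloch_norm_nonneg)
qed

lemma ess_norm_eq_0_if_neg_compact_on_disc:
  assumes "compact_op \<alpha> K" and "\<And>f z. z \<in> ball 0 1 \<Longrightarrow> K f z = - T f z"
  shows "ess_norm \<alpha> T = 0"
proof (rule antisym)
  have annihilated: "bloch_norm \<alpha> (\<lambda>z. T f z + K f z) \<le> ereal 0" for f
  proof -
    have "deriv (\<lambda>z. T f z + K f z) z = 0" if z: "z \<in> ball 0 1" for z
    proof (rule DERIV_imp_deriv, rule has_field_derivative_transform_within_open[OF _ open_ball z])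
      show "((\<lambda>z. 0) has_field_derivative 0) (at z)"
        by simp
    qed (simp add: assms(2))
    then show ?thesis
      by (simp add: bloch_norm_le_ereal_iff)
  qed
  have "op_norm \<alpha> (\<lambda>f z. T f z + K f z) \<le> 0"
    unfolding op_norm_def by (rule SUP_least) (use annihilated in \<open>simp add: zero_ereal_def\<close>)
  then show "ess_norm \<alpha> T \<le> 0"
    unfolding ess_norm_def using assms(1) by (intro INF_lower2) auto
  show "0 \<le> ess_norm \<alpha> T"
    unfolding ess_norm_def by (intro INF_greatest op_norm_nonneg)
qed

theorem theorem4p2:
  fixes \<alpha> :: real and k :: nat and a :: "nat \<Rightarrow> complex" and h :: "complex \<Rightarrow> complex"
  assumes "\<alpha> > 0"
    and "k \<ge> 1"
    and "\<forall>j\<in>{1..k}. cmod (a j) > 0"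
    and "h holomorphic_on ball 0 1"
    and "\<exists>B. \<forall>z\<in>ball 0 1. cmod (h z) \<le> B"
  shows "ess_norm \<alpha> (alexander_op (\<lambda>w. (\<Sum>j=1..k. a j) + h w)) = 0"
proof -
  \<comment> \<open>only boundedness of the symbol is used\<close>
  define g where "g = (\<lambda>w. (\<Sum>j=1..k. a j) + h w)"
  obtain B where B: "\<And>z. z \<in> ball 0 1 \<Longrightarrow> cmod (h z) \<le> B"
    using assms(5) by blast
  have g_bound: "cmod (g z) \<le> cmod (\<Sum>j=1..k. a j) + B" if "z \<in> ball 0 1" for z
    using norm_triangle_ineq[of "\<Sum>j=1..k. a j" "h z"] B[OF that] by (simp add: g_def)
  have g_holo: "g holomorphic_on ball 0 1"
    unfolding g_def using assms(4) by (intro holomorphic_intros)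
  have "compact_op \<alpha> (neg_alexander_on_disc g)"
    using assms(1) g_holo g_bound by (rule compact_op_neg_alexander_on_disc)
  then show ?thesis
    unfolding g_def[symmetric]
    by (rule ess_norm_eq_0_if_neg_compact_on_disc) (simp add: neg_alexander_on_disc_def)
qed

end
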